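(* Let $G=(V,E)$ be a connected undirected graph on $n$ nodes with Laplacian $L$, let $\kappa_1,\dots,\kappa_n>0$, and let $D_\kappa=\mathrm{diag}(\kappa_1,\dots,\kappa_n)$. For $S\subseteq V$ let $D_S$ be the diagonal $0/1$ matrix with $(D_S)_{ii}=1$ iff $i\in S$, and set $Q_S=L+D_\kappa D_S$ (write $Q_v$ for $Q_{\{v\}}$). Define $f:2^V\to\mathbb{R}$ by $f(\emptyset)=0$ and $f(S)=C-\mathrm{tr}(Q_S^{-1})$ for $S\neq\emptyset$, where $C=2\max_{v\in V}\mathrm{tr}(Q_v^{-1})$. Then $f$ is submodular, i.e., for all $A,B\subseteq V$, $f(A)+f(B)\ge f(A\cup B)+f(A\cap B)$.
   Context: For nonempty $S$, the matrix $Q_S$ is positive definite, so $Q_S^{-1}$ exists. *)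

theory Defs
  imports "HOL-Analysis.Analysis"
begin

definition undirected_graph :: "('n \<Rightarrow> 'n \<Rightarrow> bool) \<Rightarrow> bool" where
  "undirected_graph E \<longleftrightarrow> (\<forall>i j. E i j \<longrightarrow> E j i) \<and> (\<forall>i. \<not> E i i)"

definition graph_connected :: "('n \<Rightarrow> 'n \<Rightarrow> bool) \<Rightarrow> bool" where
  "graph_connected E \<longleftrightarrow> (\<forall>i j. E\<^sup>*\<^sup>* i j)"

definition laplacian :: "('n::finite \<Rightarrow> 'n \<Rightarrow> bool) \<Rightarrow> real^'n^'n" where
  "laplacian E = (\<chi> i j. if i = j then real (card {k. E i k}) else if E i j then -1 else 0)"

definition Qmat :: "('n::finite \<Rightarrow> 'n \<Rightarrow> bool) \<Rightarrow> ('n \<Rightarrow> real) \<Rightarrow> 'n set \<Rightarrow> real^'n^'n" where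
  "Qmat E \<kappa> S = laplacian E + (\<chi> i j. if i = j \<and> i \<in> S then \<kappa> i else 0)"

definition Cconst :: "('n::finite \<Rightarrow> 'n \<Rightarrow> bool) \<Rightarrow> ('n \<Rightarrow> real) \<Rightarrow> real" where
  "Cconst E \<kappa> = 2 * (MAX v\<in>UNIV. trace (matrix_inv (Qmat E \<kappa> {v})))"

definition fset :: "('n::finite \<Rightarrow> 'n \<Rightarrow> bool) \<Rightarrow> ('n \<Rightarrow> real) \<Rightarrow> 'n set \<Rightarrow> real" where
  "fset E \<kappa> S = (if S = {} then 0 else Cconst E \<kappa> - trace (matrix_inv (Qmat E \<kappa> S)))"

end

theory Submission
  imports Defs
begin

text \<open>A minimum principle for $L + D_\kappa D_S$ on a connected graph ($S \neq \emptyset$)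
shows that $Q_S$ is invertible with an entrywise nonnegative inverse. The resolvent identity
$Q_S^{-1} - Q_T^{-1} = Q_S^{-1} D_\kappa D_{T \setminus S} Q_T^{-1}$ for $S \subseteq T$ then makes
the entries of $Q_S^{-1}$ antitone in $S$, and writes the gain
$\mathrm{tr}(Q_S^{-1}) - \mathrm{tr}(Q_{S \cup U}^{-1})$ as a sum of products of two such entries,
which therefore shrinks as $S$ grows: this is submodularity on nonempty sets. When
$A \cap B = \emptyset$ the convention $f(\emptyset) = 0$ is covered by the choice of $C$, which bounds
$2\,\mathrm{tr}(Q_S^{-1})$ by antitonicity.\<close>

definition diag_on :: "('n::finite \<Rightarrow> real) \<Rightarrow> 'n set \<Rightarrow> real^'n^'n" where
  "diag_on d X = (\<chi> i j. if i = j \<and> i \<in> X then d i else 0)"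

lemma matrix_mult_diag_on_mult_nth:
  "(A ** diag_on d X ** B) $ i $ j = (\<Sum>k\<in>X. A$i$k * d k * B$k$j)"
proof -
  have "(A ** diag_on d X) $ i $ l = (if l \<in> X then A$i$l * d l else 0)" for l
  proof -
    have "(A ** diag_on d X) $ i $ l = (\<Sum>k\<in>UNIV. if k = l then A$i$k * (if k \<in> X then d k else 0) else 0)"
      unfolding matrix_matrix_mult_def diag_on_def vec_lambda_beta by (intro sum.cong) auto
    then show ?thesis by simp
  qed
  then show ?thesis
    by (simp add: matrix_matrix_mult_def if_distrib[of "\<lambda>a. a * _"] sum.If_cases)
qed

lemma matrix_mult_matrix_inv:
  fixes A :: "'a::semiring_1^'n^'m"
  assumes "invertible A"
  shows "A ** matrix_inv A = mat 1" and "matrix_inv A ** A = mat 1"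
  using someI_ex[OF assms[unfolded invertible_def]] by (simp_all add: matrix_inv_def)

lemma matrix_mult_diff_distrib:
  fixes A B C :: "'a::comm_ring_1^'n^'n"
  shows "A ** (B - C) = A ** B - A ** C" and "(B - C) ** A = B ** A - C ** A"
  by (simp_all add: vec_eq_iff matrix_matrix_mult_def algebra_simps sum_subtractf)

lemma matrix_inv_diff:
  fixes A B :: "'a::comm_ring_1^'n^'n"
  assumes "invertible A" and "invertible B"
  shows "matrix_inv A - matrix_inv B = matrix_inv A ** (B - A) ** matrix_inv B"
  by (simp add: matrix_mult_diff_distrib matrix_mul_assoc[symmetric] matrix_mult_matrix_inv assms)

lemma Qmat_superset:
  "S \<subseteq> T \<Longrightarrow> Qmat E \<kappa> T = Qmat E \<kappa> S + diag_on \<kappa> (T - S)"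
  by (auto simp: Qmat_def diag_on_def vec_eq_iff)

lemma Qmat_mult_vec_nth:
  assumes "undirected_graph E"
  shows "(Qmat E \<kappa> S *v x) $ i = (\<Sum>k\<in>{k. E i k}. x$i - x$k) + (if i \<in> S then \<kappa> i * x$i else 0)"
proof -
  have "\<not> E i i" using assms by (simp add: undirected_graph_def)
  then have "(Qmat E \<kappa> S *v x) $ i = (\<Sum>j\<in>UNIV. (if j = i then real (card {k. E i k}) * x$i
      + (if i \<in> S then \<kappa> i * x$i else 0) else 0) - (if j \<in> {k. E i k} then x$j else 0))"
    unfolding matrix_vector_mult_def Qmat_def laplacian_def vec_lambda_beta vector_add_component
    by (intro sum.cong) (auto simp: algebra_simps)
  then show ?thesis by (simp add: sum_subtractf sum.If_cases)
qed

locale grounded_laplacian =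
  fixes E :: "'n::finite \<Rightarrow> 'n \<Rightarrow> bool" and \<kappa> :: "'n \<Rightarrow> real"
  assumes undirected: "undirected_graph E" and connected: "graph_connected E"
    and weight_pos: "\<And>i. \<kappa> i > 0"
begin

abbreviation "Q S \<equiv> Qmat E \<kappa> S"

lemma Qmat_at_negative_minimum:
  assumes min: "\<And>j. x$y \<le> x$j" and neg: "x$y < 0" and "0 \<le> (Q S *v x) $ y"
  shows "y \<notin> S" and "E y z \<Longrightarrow> x$z = x$y"
proof -
  let ?N = "{k. E y k}"
  have "(\<Sum>k\<in>?N. x$y - x$k) = - (\<Sum>k\<in>?N. x$k - x$y)"
    by (simp add: sum_negf[symmetric])
  moreover have "0 \<le> (\<Sum>k\<in>?N. x$k - x$y)" "(if y \<in> S then \<kappa> y * x$y else 0) \<le> 0"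
    using min mult_pos_neg[OF weight_pos[of y] neg] by (auto intro: sum_nonneg)
  moreover have "0 \<le> (\<Sum>k\<in>?N. x$y - x$k) + (if y \<in> S then \<kappa> y * x$y else 0)"
    using assms(3) Qmat_mult_vec_nth[OF undirected] by simp
  ultimately have "(\<Sum>k\<in>?N. x$k - x$y) = 0" and S: "(if y \<in> S then \<kappa> y * x$y else 0) = 0"
    by linarith+
  then show "E y z \<Longrightarrow> x$z = x$y"
    using sum_nonneg_eq_0_iff[of ?N "\<lambda>k. x$k - x$y"] min by force
  show "y \<notin> S" using S neg weight_pos[of y] by (auto split: if_splits)
qed

lemma Qmat_minimum_principle:
  assumes "S \<noteq> {}" and nonneg: "\<And>j. 0 \<le> (Q S *v x) $ j"
  shows "0 \<le> x$i"
proof (rule ccontr)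
  assume "\<not> 0 \<le> x$i"
  have "Min (range (\<lambda>j. x$j)) \<in> range (\<lambda>j. x$j)" by (intro Min_in) auto
  then obtain y where "x$y = Min (range (\<lambda>j. x$j))" by (metis imageE)
  then have min: "\<And>j. x$y \<le> x$j" by simp
  with \<open>\<not> 0 \<le> x$i\<close> have neg: "x$y < 0" by (meson less_le_trans not_le)
  have "x$j = x$y" if "E\<^sup>*\<^sup>* y j" for j
    using that
  proof (induction rule: rtranclp_induct)
    case (step j k)
    then show ?case
      using Qmat_at_negative_minimum(2)[of x j S k] min neg nonneg by simp
  qed simp
  then have "\<And>j. x$j = x$y" using connected by (simp add: graph_connected_def)
  then have "j \<notin> S" for j
    using Qmat_at_negative_minimum(1)[of x j S] min neg nonneg by metis
  with \<open>S \<noteq> {}\<close> show False by blast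
qed

lemma invertible_Qmat:
  assumes "S \<noteq> {}"
  shows "invertible (Q S)"
proof -
  have "x = 0" if "Q S *v x = 0" for x
  proof -
    have minus: "Q S *v (- x) = 0"
      using that by (simp add: vec_eq_iff matrix_vector_mult_def sum_negf)
    have "0 \<le> (- x)$i" for i by (rule Qmat_minimum_principle[OF assms]) (simp add: minus)
    moreover have "0 \<le> x$i" for i by (rule Qmat_minimum_principle[OF assms]) (simp add: that)
    ultimately show ?thesis by (simp add: vec_eq_iff order_antisym)
  qed
  then have "\<exists>B. B ** Q S = mat 1" by (subst matrix_left_invertible_ker) blast
  then show ?thesis by (subst invertible_left_inverse)
qed

abbreviation "M S \<equiv> matrix_inv (Q S)"

lemma matrix_inv_Qmat_nonneg:
  assumes "S \<noteq> {}"
  shows "0 \<le> M S $ i $ j"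
proof -
  have "Q S *v column j (M S) = column j (Q S ** M S)"
    by (simp add: vec_eq_iff column_def matrix_vector_mult_def matrix_matrix_mult_def)
  also have "\<dots> = column j (mat 1)"
    by (simp add: matrix_mult_matrix_inv invertible_Qmat[OF assms])
  finally have col: "Q S *v column j (M S) = column j (mat 1)" .
  have "0 \<le> column j (M S) $ i"
    by (rule Qmat_minimum_principle[OF assms], unfold col) (simp add: column_def mat_def)
  then show ?thesis by (simp add: column_def)
qed

lemma matrix_inv_Qmat_diff:
  assumes "S \<noteq> {}" "S \<subseteq> T"
  shows "M S - M T = M S ** diag_on \<kappa> (T - S) ** M T"
proof -
  have "T \<noteq> {}" using assms by auto
  moreover have "Q T - Q S = diag_on \<kappa> (T - S)" using Qmat_superset[OF assms(2)] by simp
  ultimately show ?thesis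
    using matrix_inv_diff[OF invertible_Qmat[OF assms(1)] invertible_Qmat] by simp
qed

lemma matrix_inv_Qmat_antimono:
  assumes "S \<noteq> {}" "S \<subseteq> T"
  shows "M T $ i $ j \<le> M S $ i $ j"
proof -
  have "0 \<le> (M S - M T) $ i $ j"
    unfolding matrix_inv_Qmat_diff[OF assms] matrix_mult_diag_on_mult_nth
    using assms weight_pos by (intro sum_nonneg mult_nonneg_nonneg matrix_inv_Qmat_nonneg less_imp_le) auto
  then show ?thesis by simp
qed

lemma trace_matrix_inv_Qmat_diff:
  assumes "S \<noteq> {}" "S \<subseteq> T"
  shows "trace (M S) - trace (M T) = (\<Sum>i\<in>UNIV. \<Sum>k\<in>T - S. M S$i$k * \<kappa> k * M T$k$i)"
proof -
  have "trace (M S) - trace (M T) = trace (M S - M T)"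
    by (simp add: trace_def sum_subtractf)
  then show ?thesis
    unfolding matrix_inv_Qmat_diff[OF assms] trace_def matrix_mult_diag_on_mult_nth by simp
qed

lemma trace_matrix_inv_Qmat_nonneg: "S \<noteq> {} \<Longrightarrow> 0 \<le> trace (M S)"
  unfolding trace_def by (intro sum_nonneg matrix_inv_Qmat_nonneg)

lemma trace_matrix_inv_Qmat_antimono:
  assumes "S \<noteq> {}" "S \<subseteq> T"
  shows "trace (M T) \<le> trace (M S)"
proof -
  have "0 \<le> (\<Sum>i\<in>UNIV. \<Sum>k\<in>T - S. M S$i$k * \<kappa> k * M T$k$i)"
    using assms weight_pos by (intro sum_nonneg mult_nonneg_nonneg matrix_inv_Qmat_nonneg less_imp_le) auto
  then show ?thesis using trace_matrix_inv_Qmat_diff[OF assms] by linarith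
qed

lemma trace_matrix_inv_Qmat_diminishing_returns:
  assumes "S \<noteq> {}" "S \<subseteq> T" "T \<inter> U = {}"
  shows "trace (M T) - trace (M (T \<union> U)) \<le> trace (M S) - trace (M (S \<union> U))"
proof -
  have nonempty: "T \<noteq> {}" "T \<union> U \<noteq> {}" using assms by auto
  have U: "T \<union> U - T = U" "S \<union> U - S = U" using assms(2,3) by auto
  have "M T $ i $ k * \<kappa> k * M (T \<union> U) $ k $ i \<le> M S $ i $ k * \<kappa> k * M (S \<union> U) $ k $ i"
    for i k
  proof (rule mult_mono)
    show "M T $ i $ k * \<kappa> k \<le> M S $ i $ k * \<kappa> k"
      using matrix_inv_Qmat_antimono[OF assms(1,2)] weight_pos[of k] by simp
    show "M (T \<union> U) $ k $ i \<le> M (S \<union> U) $ k $ i"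
      using assms by (intro matrix_inv_Qmat_antimono) auto
    show "0 \<le> M S $ i $ k * \<kappa> k"
      using matrix_inv_Qmat_nonneg[OF assms(1)] weight_pos[of k] by simp
    show "0 \<le> M (T \<union> U) $ k $ i" by (rule matrix_inv_Qmat_nonneg[OF nonempty(2)])
  qed
  then have "(\<Sum>i\<in>UNIV. \<Sum>k\<in>U. M T $ i $ k * \<kappa> k * M (T \<union> U) $ k $ i)
      \<le> (\<Sum>i\<in>UNIV. \<Sum>k\<in>U. M S $ i $ k * \<kappa> k * M (S \<union> U) $ k $ i)"
    by (intro sum_mono)
  moreover have "trace (M S) - trace (M (S \<union> U))
      = (\<Sum>i\<in>UNIV. \<Sum>k\<in>U. M S $ i $ k * \<kappa> k * M (S \<union> U) $ k $ i)"
    using trace_matrix_inv_Qmat_diff[OF assms(1), of "S \<union> U"] by (simp only: U Un_upper1)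
  moreover have "trace (M T) - trace (M (T \<union> U))
      = (\<Sum>i\<in>UNIV. \<Sum>k\<in>U. M T $ i $ k * \<kappa> k * M (T \<union> U) $ k $ i)"
    using trace_matrix_inv_Qmat_diff[OF nonempty(1), of "T \<union> U"] by (simp only: U Un_upper1)
  ultimately show ?thesis by linarith
qed

lemma trace_matrix_inv_Qmat_le_Cconst:
  assumes "S \<noteq> {}"
  shows "2 * trace (M S) \<le> Cconst E \<kappa>"
proof -
  obtain v where "v \<in> S" using assms by auto
  then have "trace (M S) \<le> trace (M {v})"
    by (intro trace_matrix_inv_Qmat_antimono) auto
  also have "\<dots> \<le> (MAX v\<in>UNIV. trace (M {v}))" by (rule Max_ge) simp_all
  finally show ?thesis unfolding Cconst_def by linarith
qed

end

theorem theorem2: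
  fixes E :: "'n::finite \<Rightarrow> 'n \<Rightarrow> bool" and \<kappa> :: "'n \<Rightarrow> real"
  assumes "undirected_graph E" and "graph_connected E"
    and "\<And>i. \<kappa> i > 0"
  shows "\<forall>A B. fset E \<kappa> A + fset E \<kappa> B \<ge> fset E \<kappa> (A \<union> B) + fset E \<kappa> (A \<inter> B)"
proof (intro allI)
  fix A B :: "'n set"
  interpret grounded_laplacian E \<kappa> using assms by unfold_locales
  have f: "fset E \<kappa> S = Cconst E \<kappa> - trace (M S)" if "S \<noteq> {}" for S
    using that by (simp add: fset_def)
  show "fset E \<kappa> A + fset E \<kappa> B \<ge> fset E \<kappa> (A \<union> B) + fset E \<kappa> (A \<inter> B)"
  proof (cases "A = {} \<or> B = {}")
    case True
    then show ?thesis by (auto simp: fset_def)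
  next
    case False
    then have A: "A \<noteq> {}" and B: "B \<noteq> {}" and AB: "A \<union> B \<noteq> {}" by auto
    show ?thesis
    proof (cases "A \<inter> B = {}")
      case True
      then show ?thesis
        using trace_matrix_inv_Qmat_le_Cconst[OF A] trace_matrix_inv_Qmat_le_Cconst[OF B]
          trace_matrix_inv_Qmat_nonneg[OF AB] f[OF A] f[OF B] f[OF AB]
        by (simp add: fset_def)
    next
      case False
      have "trace (M A) - trace (M (A \<union> (B - A)))
          \<le> trace (M (A \<inter> B)) - trace (M (A \<inter> B \<union> (B - A)))"
        using False by (intro trace_matrix_inv_Qmat_diminishing_returns) auto
      moreover have "A \<union> (B - A) = A \<union> B" "A \<inter> B \<union> (B - A) = B" by auto
      ultimately show ?thesis using f[OF A] f[OF B] f[OF AB] f[OF False] by simp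
    qed
  qed
qed

end
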